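(* Let $a=e_1=(1,0,\dots,0)$, let $P$ be a distribution on $\mathbb{R}^k$ with finite second moments and covariance $\Sigma$ whose minimal eigenvalue is $\gamma_{\min}>0$, and let $\widehat\Sigma$ be any non-random symmetric positive-definite matrix with $\|\widehat\Sigma-\Sigma\|_F\le\gamma_{\min}/2$. Let $\hat\theta_{\mathrm{MultiPPI}(\widehat\Sigma)}$ be computed on samples from $P$ (independent of nothing but themselves, as described in the context). Then \[ \mathbb{E}\Big[\big(\hat\theta_{\mathrm{MultiPPI}(\widehat\Sigma)}-\theta^*\big)^2\Big]\le\mathcal V_B+\frac{4\sigma^2_{\mathrm{classical}}}{\gamma_{\min}}\,\|\widehat\Sigma-\Sigma\|_F , \] where $\|\cdot\|_F$ is the Frobenius norm.
   Context: $X\sim P$ in $\mathbb{R}^k$, $\theta^*=a^\top\mathbb{E}X=\mathbb{E}X_1$. $\mathcal I$ is a collection of nonempty subsets of $\{1,\dots,k\}$; $P_I:\mathbb{R}^k\to\mathbb{R}^{|I|}$ is the coordinate projection onto $I$; for a matrix $A$, $A_I=P_IAP_I^\top$. Costs $c_I\in\mathbb{R}^m_{\ge0}$, budget $B\in\mathbb{R}^m_{\ge0}$, vector inequalities componentwise; an allocation $\underline n\in\mathbb{Z}^{\mathcal I}_{\ge0}$ is feasible if $\sum_In_Ic_I\le B$. Weights $\lambda_I\in\mathbb{R}^{|I|}$ are unbiased if $\sum_{I:n_I>0}P_I^\top\lambda_I=a$. For SPD $A$, $\hat\theta_{\mathrm{MultiPPI}(A)}=\sum_{I:n_I>0}\frac1{n_I}\sum_{j=1}^{n_I}\lambda_I^\top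 X_I^{(I,j)}$, where $(\underline n,\underline\lambda)$ minimizes $\sum_{I:n_I>0}\frac1{n_I}\lambda_I^\top A_I\lambda_I$ over feasible unbiased pairs and $X^{(I,j)}$ are mutually independent copies of $X\sim P$ (only coordinates $I$ observed). $\mathcal V_B$ is the minimum of $\sum_{I:n_I>0}\frac1{n_I}\lambda_I^\top\Sigma_I\lambda_I$ over feasible unbiased pairs. $\sigma^2_{\mathrm{classical}}=\min\Sigma_{11}/n^0_{I^0}$, the minimum over $I^0\in\mathcal I$ with $1\in I^0$, where $n^0_{I^0}$ is the largest integer $n$ with $nc_{I^0}\le B$; assume at least one such $I^0$ has $n^0_{I^0}\ge1$. *)

theory Defs
  imports "HOL-Probability.Probability"
begin

text \<open>Vectors in R^k are modelled as real^'k for a finite index type 'k; index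
  sets I are subsets of 'k; weights lambda_I in R^{|I|} are modelled by their
  zero-extension P_I^T lambda_I, i.e. vectors in real^'k vanishing outside I.\<close>

definition eigenvalues :: "real^'n^'n \<Rightarrow> real set" where
  "eigenvalues A = {c. \<exists>v. v \<noteq> 0 \<and> A *v v = c *\<^sub>R v}"

definition min_eigenvalue :: "real^'n^'n \<Rightarrow> real" where
  "min_eigenvalue A = Min (eigenvalues A)"

definition frob_norm :: "real^'n^'n \<Rightarrow> real" where
  "frob_norm A = sqrt (\<Sum>i\<in>UNIV. \<Sum>j\<in>UNIV. (A $ i $ j)\<^sup>2)"

definition spd :: "real^'n^'n \<Rightarrow> bool" where
  "spd A \<longleftrightarrow> transpose A = A \<and> (\<forall>x. x \<noteq> 0 \<longrightarrow> x \<bullet> (A *v x) > 0)"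

definition mean_vec :: "(real^'k) measure \<Rightarrow> real^'k" where
  "mean_vec P = (\<chi> i. \<integral>x. x $ i \<partial>P)"

definition cov_matrix :: "(real^'k) measure \<Rightarrow> real^'k^'k" where
  "cov_matrix P = (\<chi> i j. \<integral>x. (x $ i - mean_vec P $ i) * (x $ j - mean_vec P $ j) \<partial>P)"

definition feasible_alloc ::
  "'k set set \<Rightarrow> ('k set \<Rightarrow> real^'m) \<Rightarrow> real^'m \<Rightarrow> ('k set \<Rightarrow> nat) \<Rightarrow> bool" where
  "feasible_alloc \<I> c B n \<longleftrightarrow>
     (\<forall>I. I \<notin> \<I> \<longrightarrow> n I = 0) \<and>
     (\<forall>r. (\<Sum>I\<in>\<I>. real (n I) * (c I $ r)) \<le> B $ r)"

definition unbiased_weights ::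
  "'k set set \<Rightarrow> real^'k \<Rightarrow> ('k set \<Rightarrow> nat) \<Rightarrow> ('k set \<Rightarrow> real^'k) \<Rightarrow> bool" where
  "unbiased_weights \<I> a n l \<longleftrightarrow>
     (\<forall>I\<in>\<I>. n I > 0 \<longrightarrow> (\<forall>i. i \<notin> I \<longrightarrow> l I $ i = 0)) \<and>
     (\<Sum>I\<in>{I\<in>\<I>. n I > 0}. l I) = a"

definition feasible_unbiased ::
  "'k set set \<Rightarrow> ('k set \<Rightarrow> real^'m) \<Rightarrow> real^'m \<Rightarrow> real^'k
     \<Rightarrow> ('k set \<Rightarrow> nat) \<Rightarrow> ('k set \<Rightarrow> real^'k) \<Rightarrow> bool" where
  "feasible_unbiased \<I> c B a n l \<longleftrightarrow> feasible_alloc \<I> c B n \<and> unbiased_weights \<I> a n l"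

text \<open>Objective sum_{I: n_I>0} (1/n_I) lambda_I^T A_I lambda_I; since lambda is
  zero outside I this equals (P_I^T lambda_I)^T A (P_I^T lambda_I).\<close>
definition alloc_objective ::
  "real^'k^'k \<Rightarrow> 'k set set \<Rightarrow> ('k set \<Rightarrow> nat) \<Rightarrow> ('k set \<Rightarrow> real^'k) \<Rightarrow> real" where
  "alloc_objective A \<I> n l = (\<Sum>I\<in>{I\<in>\<I>. n I > 0}. (l I \<bullet> (A *v l I)) / real (n I))"

definition V_B ::
  "real^'k^'k \<Rightarrow> 'k set set \<Rightarrow> ('k set \<Rightarrow> real^'m) \<Rightarrow> real^'m \<Rightarrow> real^'k \<Rightarrow> real" where
  "V_B \<Sigma> \<I> c B a = Inf {alloc_objective \<Sigma> \<I> n l | n l. feasible_unbiased \<I> c B a n l}"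

text \<open>sigma^2_classical = min over I0 in the collection with the distinguished
  coordinate in I0 of Sigma_11 / n^0_{I0}, n^0_{I0} the largest n with n c_{I0} <= B
  (only I0 with n^0_{I0} >= 1 count).  Since Sigma_11 >= 0, the minimum over the
  largest n equals the infimum over all admissible n >= 1.\<close>
definition sigma2_classical ::
  "real^'k^'k \<Rightarrow> 'k \<Rightarrow> 'k set set \<Rightarrow> ('k set \<Rightarrow> real^'m) \<Rightarrow> real^'m \<Rightarrow> real" where
  "sigma2_classical \<Sigma> one \<I> c B =
     Inf {\<Sigma> $ one $ one / real N | I0 N. I0 \<in> \<I> \<and> one \<in> I0 \<and> N \<ge> 1 \<and>
            (\<forall>r. real N * (c I0 $ r) \<le> B $ r)}"

definition multippi_est ::
  "'k set set \<Rightarrow> ('k set \<Rightarrow> nat) \<Rightarrow> ('k set \<Rightarrow> real^'k) \<Rightarrow> ('k set \<Rightarrow> nat \<Rightarrow> 'w \<Rightarrow> real^'k)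
     \<Rightarrow> 'w \<Rightarrow> real" where
  "multippi_est \<I> n l X \<omega> =
     (\<Sum>I\<in>{I\<in>\<I>. n I > 0}. (1 / real (n I)) * (\<Sum>j<n I. l I \<bullet> X I j \<omega>))"

end

theory Submission
  imports Defs
begin

text \<open>The MultiPPI error is a sum of independent centred terms \<open>\<lambda>\<^sub>I\<^sup>T (X - \<mu>) / n\<^sub>I\<close>,
  so its mean squared error is exactly the allocation objective under the true covariance
  \<open>\<Sigma>\<close>, evaluated at the pair that is optimal for \<open>\<Sigma>hat\<close>. On every pair the objectives for
  \<open>\<Sigma>hat\<close> and \<open>\<Sigma>\<close> differ by at most \<open>\<parallel>\<Sigma>hat - \<Sigma>\<parallel>\<^sub>F \<Sum>\<^sub>I \<parallel>\<lambda>\<^sub>I\<parallel>\<^sup>2 / n\<^sub>I\<close>, and this weight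
  (the objective for the identity matrix) is at most the \<open>\<Sigma>\<close>-objective divided by
  \<open>\<gamma>\<^sub>m\<^sub>i\<^sub>n\<close>. Hence the \<open>\<Sigma>hat\<close>-optimal pair is within the factor
  \<open>1 + 4 \<parallel>\<Sigma>hat - \<Sigma>\<parallel>\<^sub>F / \<gamma>\<^sub>m\<^sub>i\<^sub>n\<close> of \<open>V\<^sub>B\<close>, and \<open>V\<^sub>B \<le> \<sigma>\<^sup>2\<^sub>c\<^sub>l\<^sub>a\<^sub>s\<^sub>s\<^sub>i\<^sub>c\<^sub>a\<^sub>l\<close> since
  sampling only a subset that contains the target coordinate is feasible.\<close>

lemma frob_norm_eq_norm: "frob_norm A = norm A"
  by (simp add: frob_norm_def norm_vec_def L2_set_def sum_nonneg)

lemma norm_matrix_vector_mult_le: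
  fixes A :: "real^'n^'m"
  shows "norm (A *v x) \<le> norm A * norm x"
proof -
  have "norm (A *v x) \<le> norm (\<chi> i. norm (A $ i) * norm x)"
  proof (rule norm_le_componentwise_cart)
    fix i
    have "\<bar>A $ i \<bullet> x\<bar> \<le> norm (A $ i) * norm x" by (rule Cauchy_Schwarz_ineq2)
    then show "norm ((A *v x) $ i) \<le> norm ((\<chi> i. norm (A $ i) * norm x) $ i)"
      by (simp add: matrix_vector_mult_def inner_vec_def)
  qed
  also have "\<dots> = norm (norm x *\<^sub>R (\<chi> i. norm (A $ i)))"
    by (rule arg_cong[where f = norm]) (simp add: vec_eq_iff)
  also have "\<dots> = norm A * norm x"
    by (simp add: norm_vec_def[of "\<chi> i. norm (A $ i)"] norm_vec_def[of A] mult.commute)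
  finally show ?thesis .
qed

lemma abs_quadratic_form_le_frob_norm:
  fixes A :: "real^'n^'n"
  shows "\<bar>x \<bullet> (A *v x)\<bar> \<le> frob_norm A * (norm x)\<^sup>2"
proof -
  have "\<bar>x \<bullet> (A *v x)\<bar> \<le> norm x * norm (A *v x)" by (rule Cauchy_Schwarz_ineq2)
  also have "\<dots> \<le> norm x * (norm A * norm x)"
    by (intro mult_left_mono norm_matrix_vector_mult_le) simp
  finally show ?thesis by (simp add: frob_norm_eq_norm power2_eq_square ac_simps)
qed

lemma symmetric_matrix_inner_commute:
  fixes A :: "real^'n^'n"
  assumes "transpose A = A"
  shows "(A *v u) \<bullet> w = u \<bullet> (A *v w)"
  by (metis assms dot_lmul_matrix vector_transpose_matrix)

lemma finite_eigenvalues_symmetric: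
  fixes A :: "real^'n^'n"
  assumes sym: "transpose A = A"
  shows "finite (eigenvalues A)"
proof -
  define f where "f c = (SOME v. v \<noteq> 0 \<and> A *v v = c *\<^sub>R v)" for c
  have f: "f c \<noteq> 0 \<and> A *v f c = c *\<^sub>R f c" if "c \<in> eigenvalues A" for c
    using that unfolding eigenvalues_def f_def by (rule CollectE) (rule someI_ex)
  have orth: "f c \<bullet> f d = 0" if "c \<in> eigenvalues A" "d \<in> eigenvalues A" "c \<noteq> d" for c d
  proof -
    have "c * (f c \<bullet> f d) = (A *v f c) \<bullet> f d" using f[OF that(1)] by simp
    also have "\<dots> = f c \<bullet> (A *v f d)" by (rule symmetric_matrix_inner_commute[OF sym])
    also have "\<dots> = d * (f c \<bullet> f d)" using f[OF that(2)] by simp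
    finally show ?thesis using that(3) by simp
  qed
  have "inj_on f (eigenvalues A)"
    by (rule inj_onI) (metis f orth inner_eq_zero_iff)
  moreover have "independent (f ` eigenvalues A)"
    by (rule pairwise_orthogonal_independent)
      (use orth f in \<open>fastforce simp: pairwise_def orthogonal_def\<close>)+
  ultimately show ?thesis
    using independent_bound finite_imageD by blast
qed

lemma psd_quadratic_form_eq_0_imp_kernel:
  fixes A :: "real^'n^'n"
  assumes sym: "transpose A = A" and psd: "\<And>x. 0 \<le> x \<bullet> (A *v x)"
    and zero: "v \<bullet> (A *v v) = 0"
  shows "A *v v = 0"
proof (rule ccontr)
  define w where "w = A *v v"
  define R where "R = w \<bullet> (A *v w)"
  define t where "t = (w \<bullet> w) / (R + 1)"
  assume "A *v v \<noteq> 0"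
  then have ww: "w \<bullet> w > 0" by (simp add: w_def)
  have "R \<ge> 0" using psd by (simp add: R_def)
  then have "t > 0" and "t * R < w \<bullet> w"
    using ww by (auto simp: t_def field_simps)
  then have "t * (t * R - 2 * (w \<bullet> w)) < 0"
    using ww by (intro mult_pos_neg) linarith+
  \<comment> \<open>Moving from \<open>v\<close> against \<open>A v\<close> makes the form negative to first order.\<close>
  moreover have "(v - t *\<^sub>R w) \<bullet> (A *v (v - t *\<^sub>R w)) = t * (t * R - 2 * (w \<bullet> w))"
    using zero symmetric_matrix_inner_commute[OF sym, of v w]
    by (simp add: R_def w_def matrix_vector_mult_diff_distrib matrix_vector_mult_scaleR
        inner_diff_left inner_diff_right inner_commute algebra_simps power2_eq_square)
  ultimately show False using psd by (metis not_le)
qed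

lemma min_eigenvalue_mult_norm_le_quadratic_form:
  fixes A :: "real^'n^'n"
  assumes sym: "transpose A = A"
  shows "min_eigenvalue A * (norm x)\<^sup>2 \<le> x \<bullet> (A *v x)"
proof -
  define q where "q y = y \<bullet> (A *v y)" for y
  have "continuous_on (sphere 0 1) q"
    unfolding q_def by (intro continuous_intros linear_continuous_on matrix_vector_mul_linear)
  then obtain v where v: "v \<in> sphere 0 1" and vmin: "\<And>y. y \<in> sphere 0 1 \<Longrightarrow> q v \<le> q y"
    using continuous_attains_inf[OF compact_sphere, of 0 1 q] by auto
  define mu where "mu = q v"
  have bound: "mu * (norm y)\<^sup>2 \<le> q y" for y
  proof (cases "y = 0")
    case False
    then have "mu \<le> q (inverse (norm y) *\<^sub>R y)" using vmin mu_def by simp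
    also have "\<dots> = q y / (norm y)\<^sup>2"
      by (simp add: q_def matrix_vector_mult_scaleR power2_eq_square divide_inverse)
    finally show ?thesis using False by (simp add: field_simps)
  qed (simp add: q_def)
  \<comment> \<open>The minimiser of the Rayleigh quotient is an eigenvector with eigenvalue \<open>mu\<close>.\<close>
  have "(A - mu *\<^sub>R mat 1) *v v = 0"
  proof (rule psd_quadratic_form_eq_0_imp_kernel)
    show "transpose (A - mu *\<^sub>R mat 1) = A - mu *\<^sub>R mat 1"
      using sym by (simp add: transpose_def vec_eq_iff mat_def)
    show "0 \<le> y \<bullet> ((A - mu *\<^sub>R mat 1) *v y)" for y
      using bound[of y] by (simp add: q_def matrix_vector_mult_diff_rdistrib
          scaleR_matrix_vector_assoc[symmetric] inner_diff_right power2_norm_eq_inner)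
    show "v \<bullet> ((A - mu *\<^sub>R mat 1) *v v) = 0"
      using v by (simp add: norm_eq_1 mu_def q_def matrix_vector_mult_diff_rdistrib
          scaleR_matrix_vector_assoc[symmetric] inner_diff_right power2_norm_eq_inner)
  qed
  then have "A *v v = mu *\<^sub>R v"
    by (simp add: matrix_vector_mult_diff_rdistrib scaleR_matrix_vector_assoc[symmetric])
  moreover have "v \<noteq> 0" using v by auto
  ultimately have "mu \<in> eigenvalues A" unfolding eigenvalues_def by blast
  then have "min_eigenvalue A \<le> mu"
    unfolding min_eigenvalue_def using finite_eigenvalues_symmetric[OF sym] by simp
  then have "min_eigenvalue A * (norm x)\<^sup>2 \<le> mu * (norm x)\<^sup>2"
    by (simp add: mult_right_mono)
  also have "\<dots> \<le> x \<bullet> (A *v x)" using bound[of x] by (simp add: q_def)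
  finally show ?thesis .
qed

lemma transpose_cov_matrix: "transpose (cov_matrix P) = cov_matrix P"
  by (simp add: transpose_def cov_matrix_def vec_eq_iff mult.commute)

lemma alloc_objective_add:
  "alloc_objective (A + D) \<I> n l = alloc_objective A \<I> n l + alloc_objective D \<I> n l"
  unfolding alloc_objective_def
  by (simp add: matrix_vector_mult_add_rdistrib inner_add_right add_divide_distrib sum.distrib)

lemma alloc_objective_mat_1_nonneg: "0 \<le> alloc_objective (mat 1) \<I> n l"
  unfolding alloc_objective_def by (intro sum_nonneg) simp

lemma min_eigenvalue_mult_alloc_objective_le:
  fixes A :: "real^'k^'k"
  assumes "transpose A = A"
  shows "min_eigenvalue A * alloc_objective (mat 1) \<I> n l \<le> alloc_objective A \<I> n l"
  unfolding alloc_objective_def sum_distrib_left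
proof (rule sum_mono)
  fix I
  show "min_eigenvalue A * (l I \<bullet> (mat 1 *v l I) / real (n I)) \<le> l I \<bullet> (A *v l I) / real (n I)"
    using min_eigenvalue_mult_norm_le_quadratic_form[OF assms, of "l I"]
    by (simp add: power2_norm_eq_inner times_divide_eq_right divide_right_mono)
qed

lemma alloc_objective_nonneg:
  fixes A :: "real^'k^'k"
  assumes "transpose A = A" "0 \<le> min_eigenvalue A"
  shows "0 \<le> alloc_objective A \<I> n l"
  using mult_nonneg_nonneg[OF assms(2) alloc_objective_mat_1_nonneg]
    min_eigenvalue_mult_alloc_objective_le[OF assms(1)]
  by (rule order_trans)

lemma abs_alloc_objective_le_frob_norm:
  fixes D :: "real^'k^'k"
  shows "\<bar>alloc_objective D \<I> n l\<bar> \<le> frob_norm D * alloc_objective (mat 1) \<I> n l"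
proof -
  have "\<bar>alloc_objective D \<I> n l\<bar> \<le> (\<Sum>I\<in>{I\<in>\<I>. n I > 0}. \<bar>l I \<bullet> (D *v l I)\<bar> / real (n I))"
    unfolding alloc_objective_def by (rule order_trans[OF sum_abs]) simp
  also have "\<dots> \<le> (\<Sum>I\<in>{I\<in>\<I>. n I > 0}. frob_norm D * (norm (l I))\<^sup>2 / real (n I))"
    by (intro sum_mono divide_right_mono abs_quadratic_form_le_frob_norm) simp
  also have "\<dots> = frob_norm D * alloc_objective (mat 1) \<I> n l"
    by (simp add: alloc_objective_def sum_distrib_left power2_norm_eq_inner)
  finally show ?thesis .
qed

text \<open>With \<open>t = \<parallel>Sh - S\<parallel>\<^sub>F / \<gamma>\<^sub>m\<^sub>i\<^sub>n \<le> 1/2\<close>, on every pair the objectives for \<open>Sh\<close> and \<open>S\<close>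
  differ by at most \<open>t\<close> times the \<open>S\<close>-objective, hence by at most \<open>2t\<close> times the
  \<open>Sh\<close>-objective; so the \<open>Sh\<close>-minimiser loses at most the factor \<open>(1 + 2t)(1 + t) \<le> 1 + 4t\<close>
  against any other pair under \<open>S\<close>.\<close>
lemma alloc_objective_perturbed_minimiser_le:
  fixes S Sh :: "real^'k^'k"
  assumes sym: "transpose S = S" and gamma_pos: "0 < min_eigenvalue S"
    and close: "frob_norm (Sh - S) \<le> min_eigenvalue S / 2"
    and minimiser: "alloc_objective Sh \<I> n l \<le> alloc_objective Sh \<I> n' l'"
  shows "alloc_objective S \<I> n l
           \<le> (1 + 4 * (frob_norm (Sh - S) / min_eigenvalue S)) * alloc_objective S \<I> n' l'"
proof -
  define g where "g = min_eigenvalue S"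
  define e where "e = frob_norm (Sh - S)"
  define t where "t = e / g"
  have e_nonneg: "0 \<le> e" by (simp add: e_def frob_norm_eq_norm)
  have e_eq: "e = t * g" and t: "0 \<le> t" "t \<le> 1 / 2"
    using gamma_pos e_nonneg close by (auto simp: t_def e_def g_def field_simps)
  have perturb: "\<bar>alloc_objective Sh \<I> m k - alloc_objective S \<I> m k\<bar> \<le> e * alloc_objective (mat 1) \<I> m k"
    for m k
    using abs_alloc_objective_le_frob_norm[of "Sh - S" \<I> m k] alloc_objective_add[of S "Sh - S" \<I> m k]
    by (simp add: e_def)
  have lower: "g * alloc_objective (mat 1) \<I> m k \<le> alloc_objective S \<I> m k" for m k
    unfolding g_def by (rule min_eigenvalue_mult_alloc_objective_le[OF sym])
  define a where "a = alloc_objective S \<I> n l"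
  define b where "b = alloc_objective Sh \<I> n l"
  define a' where "a' = alloc_objective S \<I> n' l'"
  have "e * alloc_objective (mat 1) \<I> n l \<le> t * (2 * b)"
  proof -
    have "g * alloc_objective (mat 1) \<I> n l \<le> 2 * b"
      using perturb[of n l] lower[of n l] close alloc_objective_mat_1_nonneg[of \<I> n l]
        mult_right_mono[of e "g / 2" "alloc_objective (mat 1) \<I> n l"]
      by (simp add: b_def e_def g_def abs_le_iff)
    then have "t * (g * alloc_objective (mat 1) \<I> n l) \<le> t * (2 * b)"
      using t by (intro mult_left_mono)
    then show ?thesis by (simp add: e_eq ac_simps)
  qed
  then have a_le: "a \<le> (1 + 2 * t) * b"
    using perturb[of n l] by (simp add: a_def b_def algebra_simps abs_le_iff)
  have "t * (g * alloc_objective (mat 1) \<I> n' l') \<le> t * a'"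
    using lower[of n' l'] t by (simp add: a'_def mult_left_mono)
  then have "e * alloc_objective (mat 1) \<I> n' l' \<le> t * a'"
    by (simp add: e_eq ac_simps)
  then have b_le: "b \<le> (1 + t) * a'"
    using perturb[of n' l'] minimiser by (simp add: a'_def b_def algebra_simps abs_le_iff)
  have a'_nonneg: "0 \<le> a'"
    unfolding a'_def using sym gamma_pos by (simp add: alloc_objective_nonneg)
  note a_le
  also have "(1 + 2 * t) * b \<le> (1 + 2 * t) * ((1 + t) * a')"
    using b_le t by (intro mult_left_mono) auto
  also have "\<dots> \<le> (1 + 4 * t) * a'"
  proof -
    have "(1 + 2 * t) * (1 + t) \<le> 1 + 4 * t"
      using mult_left_mono[of t "1 / 2" "2 * t"] t by (simp add: algebra_simps)
    then show ?thesis using a'_nonneg by (metis mult.assoc mult_right_mono)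
  qed
  finally show ?thesis by (simp add: a_def a'_def t_def e_def g_def)
qed

lemma
  fixes S :: "real^'k^'k" and c :: "'k set \<Rightarrow> real^'m"
  assumes I0: "I0 \<in> \<I>" "one \<in> I0" "N \<ge> 1" "\<forall>r. real N * (c I0 $ r) \<le> B $ r"
  shows feasible_unbiased_single_subset:
      "feasible_unbiased \<I> c B (axis one 1) (\<lambda>I. if I = I0 then N else 0) (\<lambda>_. axis one 1)"
    and alloc_objective_single_subset:
      "alloc_objective S \<I> (\<lambda>I. if I = I0 then N else 0) (\<lambda>_. axis one 1) = S $ one $ one / real N"
proof -
  have support: "{I\<in>\<I>. (if I = I0 then N else 0) > 0} = {I0}" using I0 by auto
  have "(\<Sum>I\<in>\<I>. real (if I = I0 then N else 0) * (c I $ r)) = real N * (c I0 $ r)" for r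
    using I0(1) by (simp add: if_distrib[of real] if_distrib[of "\<lambda>x. x * _"] sum.delta' cong: if_cong)
  then show "feasible_unbiased \<I> c B (axis one 1) (\<lambda>I. if I = I0 then N else 0) (\<lambda>_. axis one 1)"
    unfolding feasible_unbiased_def feasible_alloc_def unbiased_weights_def support
    using I0 by (auto simp: axis_def)
  have "axis one 1 \<bullet> (S *v axis one 1) = S $ one $ one"
    by (simp only: inner_axis') (simp add: matrix_vector_mult_def axis_def if_distrib cong: if_cong)
  then show "alloc_objective S \<I> (\<lambda>I. if I = I0 then N else 0) (\<lambda>_. axis one 1) = S $ one $ one / real N"
    unfolding alloc_objective_def support by simp
qed

lemma bdd_below_alloc_objectives:
  fixes S :: "real^'k^'k"
  assumes "transpose S = S" "0 \<le> min_eigenvalue S"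
  shows "bdd_below {alloc_objective S \<I> n l | n l. feasible_unbiased \<I> c B a n l}"
proof (rule bdd_belowI)
  fix x assume "x \<in> {alloc_objective S \<I> n l | n l. feasible_unbiased \<I> c B a n l}"
  then obtain n l where "x = alloc_objective S \<I> n l" by blast
  then show "0 \<le> x" using alloc_objective_nonneg[OF assms] by simp
qed

lemma V_B_le_sigma2_classical:
  fixes S :: "real^'k^'k" and c :: "'k set \<Rightarrow> real^'m"
  assumes "transpose S = S" "0 \<le> min_eigenvalue S"
    and classical_ex: "\<exists>I0\<in>\<I>. one \<in> I0 \<and> (\<forall>r. c I0 $ r \<le> B $ r)"
  shows "V_B S \<I> c B (axis one 1) \<le> sigma2_classical S one \<I> c B"
  unfolding sigma2_classical_def
proof (rule cInf_greatest)
  show "{S $ one $ one / real N | I0 N. I0 \<in> \<I> \<and> one \<in> I0 \<and> N \<ge> 1 \<and>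
          (\<forall>r. real N * (c I0 $ r) \<le> B $ r)} \<noteq> {}"
  proof -
    obtain I0 where "I0 \<in> \<I>" "one \<in> I0" "\<forall>r. real 1 * (c I0 $ r) \<le> B $ r"
      using classical_ex by auto
    then show ?thesis by blast
  qed
  fix x assume "x \<in> {S $ one $ one / real N | I0 N. I0 \<in> \<I> \<and> one \<in> I0 \<and> N \<ge> 1 \<and>
                  (\<forall>r. real N * (c I0 $ r) \<le> B $ r)}"
  then obtain I0 N where I0: "I0 \<in> \<I>" "one \<in> I0" "N \<ge> 1" "\<forall>r. real N * (c I0 $ r) \<le> B $ r"
    and x: "x = S $ one $ one / real N"
    by blast
  have "x = alloc_objective S \<I> (\<lambda>I. if I = I0 then N else 0) (\<lambda>_. axis one 1)"
    unfolding x alloc_objective_single_subset[where c = c and B = B, OF I0] ..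
  then have "x \<in> {alloc_objective S \<I> n l | n l. feasible_unbiased \<I> c B (axis one 1) n l}"
    using feasible_unbiased_single_subset[where c = c and B = B, OF I0] by blast
  then show "V_B S \<I> c B (axis one 1) \<le> x"
    unfolding V_B_def by (rule cInf_lower[OF _ bdd_below_alloc_objectives[OF assms(1,2)]])
qed

lemma alloc_objective_perturbed_minimiser_le_V_B:
  fixes S Sh :: "real^'k^'k" and c :: "'k set \<Rightarrow> real^'m"
  assumes sym: "transpose S = S" and gamma_pos: "0 < min_eigenvalue S"
    and close: "frob_norm (Sh - S) \<le> min_eigenvalue S / 2"
    and classical_ex: "\<exists>I0\<in>\<I>. one \<in> I0 \<and> (\<forall>r. c I0 $ r \<le> B $ r)"
    and minimiser: "\<forall>n' l'. feasible_unbiased \<I> c B (axis one 1) n' l' \<longrightarrow>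
                       alloc_objective Sh \<I> n l \<le> alloc_objective Sh \<I> n' l'"
  shows "alloc_objective S \<I> n l
           \<le> (1 + 4 * (frob_norm (Sh - S) / min_eigenvalue S)) * V_B S \<I> c B (axis one 1)"
proof -
  define C where "C = 1 + 4 * (frob_norm (Sh - S) / min_eigenvalue S)"
  have C_pos: "0 < C"
    using gamma_pos by (simp add: C_def frob_norm_eq_norm add_pos_nonneg)
  obtain I0 where I0: "I0 \<in> \<I>" "one \<in> I0" "\<forall>r. real 1 * (c I0 $ r) \<le> B $ r"
    using classical_ex by auto
  have "alloc_objective S \<I> n l / C \<le> V_B S \<I> c B (axis one 1)"
    unfolding V_B_def
  proof (rule cInf_greatest)
    show "{alloc_objective S \<I> n' l' | n' l'. feasible_unbiased \<I> c B (axis one 1) n' l'} \<noteq> {}"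
      using feasible_unbiased_single_subset[where c = c and B = B, OF I0(1,2) _ I0(3)] by blast
    fix x assume "x \<in> {alloc_objective S \<I> n' l' | n' l'. feasible_unbiased \<I> c B (axis one 1) n' l'}"
    then obtain n' l' where "feasible_unbiased \<I> c B (axis one 1) n' l'" "x = alloc_objective S \<I> n' l'"
      by blast
    then show "alloc_objective S \<I> n l / C \<le> x"
      using alloc_objective_perturbed_minimiser_le[OF sym gamma_pos close, of \<I> n l n' l'] minimiser C_pos
      by (simp add: C_def pos_divide_le_eq mult.commute)
  qed
  then show ?thesis using C_pos by (simp add: C_def pos_divide_le_eq mult.commute)
qed

lemma (in prob_space) expectation_square_sum_indep_vars:
  fixes Y :: "'i \<Rightarrow> 'a \<Rightarrow> real"
  assumes "finite J" and indep: "indep_vars (\<lambda>_. borel) Y J"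
    and integrable: "\<And>p. p \<in> J \<Longrightarrow> integrable M (Y p)"
    and centered: "\<And>p. p \<in> J \<Longrightarrow> expectation (Y p) = 0"
    and square_integrable: "\<And>p. p \<in> J \<Longrightarrow> integrable M (\<lambda>\<omega>. (Y p \<omega>)\<^sup>2)"
  shows "expectation (\<lambda>\<omega>. (\<Sum>p\<in>J. Y p \<omega>)\<^sup>2) = (\<Sum>p\<in>J. expectation (\<lambda>\<omega>. (Y p \<omega>)\<^sup>2))"
proof -
  have cross: "integrable M (\<lambda>\<omega>. Y p \<omega> * Y q \<omega>) \<and> expectation (\<lambda>\<omega>. Y p \<omega> * Y q \<omega>) = 0"
    if "p \<in> J" "q \<in> J" "p \<noteq> q" for p q
  proof -
    have indep_pq: "indep_vars (\<lambda>_. borel) Y {p, q}"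
      by (rule indep_vars_subset[OF indep]) (use that in auto)
    have "integrable M (\<lambda>\<omega>. \<Prod>i\<in>{p, q}. Y i \<omega>)"
      by (rule indep_vars_integrable[OF _ indep_pq]) (use integrable that in auto)
    moreover have "expectation (\<lambda>\<omega>. \<Prod>i\<in>{p, q}. Y i \<omega>) = (\<Prod>i\<in>{p, q}. expectation (Y i))"
      by (rule indep_vars_lebesgue_integral[OF _ indep_pq]) (use integrable that in auto)
    ultimately show ?thesis using centered that by simp
  qed
  have products: "integrable M (\<lambda>\<omega>. Y p \<omega> * Y q \<omega>)" if "p \<in> J" "q \<in> J" for p q
    using cross[OF that] square_integrable[OF that(1)] by (cases "p = q") (auto simp: power2_eq_square)
  have "expectation (\<lambda>\<omega>. (\<Sum>p\<in>J. Y p \<omega>)\<^sup>2) = (\<Sum>p\<in>J. \<Sum>q\<in>J. expectation (\<lambda>\<omega>. Y p \<omega> * Y q \<omega>))"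
    unfolding power2_eq_square sum_product using products by (simp add: integral_sum)
  also have "\<dots> = (\<Sum>p\<in>J. \<Sum>q\<in>J. if q = p then expectation (\<lambda>\<omega>. (Y p \<omega>)\<^sup>2) else 0)"
    using cross by (intro sum.cong refl) (auto simp: power2_eq_square)
  also have "\<dots> = (\<Sum>p\<in>J. expectation (\<lambda>\<omega>. (Y p \<omega>)\<^sup>2))"
    using \<open>finite J\<close> by simp
  finally show ?thesis .
qed

lemma multippi_est_minus_eq_sum:
  assumes "(\<Sum>I\<in>{I\<in>\<I>. n I > 0}. l I) = a"
  shows "multippi_est \<I> n l X \<omega> - a \<bullet> m
           = (\<Sum>(I, j)\<in>{(I, j). I \<in> \<I> \<and> j < n I}. l I \<bullet> (X I j \<omega> - m) / real (n I))"
proof -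
  have "{(I, j). I \<in> \<I> \<and> j < n I} = Sigma {I\<in>\<I>. n I > 0} (\<lambda>I. {..<n I})" by auto
  then have "(\<Sum>(I, j)\<in>{(I, j). I \<in> \<I> \<and> j < n I}. l I \<bullet> (X I j \<omega> - m) / real (n I))
      = (\<Sum>I\<in>{I\<in>\<I>. n I > 0}. \<Sum>j<n I. l I \<bullet> (X I j \<omega> - m) / real (n I))"
    by (simp add: sum.Sigma)
  also have "\<dots> = (\<Sum>I\<in>{I\<in>\<I>. n I > 0}. (1 / real (n I)) * (\<Sum>j<n I. l I \<bullet> X I j \<omega>) - l I \<bullet> m)"
    by (intro sum.cong refl)
      (simp add: inner_diff_right sum_subtractf sum_divide_distrib[symmetric] field_simps)
  also have "\<dots> = multippi_est \<I> n l X \<omega> - a \<bullet> m"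
    unfolding multippi_est_def assms[symmetric] inner_sum_left by (simp add: sum_subtractf)
  finally show ?thesis ..
qed

locale finite_second_moment = prob_space P for P :: "(real^'k) measure" +
  assumes sets_P: "sets P = sets borel"
    and integrable_norm_square: "integrable P (\<lambda>x. (norm x)\<^sup>2)"
begin

lemma borel_measurable_P: "f \<in> borel_measurable borel \<Longrightarrow> f \<in> borel_measurable P"
  by (simp add: measurable_cong_sets[OF sets_P refl])

lemma integrable_component_mult: "integrable P (\<lambda>x. x $ i * x $ j)"
proof (rule Bochner_Integration.integrable_bound[OF integrable_norm_square])
  show "(\<lambda>x. x $ i * x $ j) \<in> borel_measurable P" by (rule borel_measurable_P) simp
  show "AE x in P. norm (x $ i * x $ j) \<le> norm ((norm x)\<^sup>2)"
    by (intro AE_I2)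
      (simp add: abs_mult power2_eq_square mult_mono component_le_norm_cart)
qed

lemma integrable_component: "integrable P (\<lambda>x. x $ i)"
  by (rule square_integrable_imp_integrable[OF borel_measurable_P])
    (use integrable_component_mult[of i i] in \<open>simp_all add: power2_eq_square\<close>)

lemma square_inner_diff_eq:
  "(v \<bullet> (x - m))\<^sup>2 = (\<Sum>i\<in>UNIV. \<Sum>j\<in>UNIV. v $ i * v $ j * ((x $ i - m $ i) * (x $ j - m $ j)))"
  unfolding inner_vec_def power2_eq_square sum_product by (simp add: ac_simps)

lemma integrable_component_diff_mult: "integrable P (\<lambda>x. (x $ i - a) * (x $ j - b))"
proof -
  have "(\<lambda>x. (x $ i - a) * (x $ j - b)) = (\<lambda>x. x $ i * x $ j - b * x $ i - a * x $ j + a * b)"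
    by (auto simp: algebra_simps)
  then show ?thesis using integrable_component_mult integrable_component by simp
qed

lemma integrable_square_inner_diff: "integrable P (\<lambda>x. (v \<bullet> (x - m))\<^sup>2)"
  unfolding square_inner_diff_eq using integrable_component_diff_mult by simp

lemma integrable_inner_diff: "integrable P (\<lambda>x. v \<bullet> (x - m))"
  unfolding inner_vec_def using integrable_component by simp

lemma integral_inner_diff_mean: "(\<integral>x. v \<bullet> (x - mean_vec P) \<partial>P) = 0"
  unfolding inner_vec_def using integrable_component by (simp add: prob_space mean_vec_def)

lemma integral_square_inner_diff_mean:
  "(\<integral>x. (v \<bullet> (x - mean_vec P))\<^sup>2 \<partial>P) = v \<bullet> (cov_matrix P *v v)"
proof -
  have "(\<integral>x. (v \<bullet> (x - mean_vec P))\<^sup>2 \<partial>P)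
      = (\<Sum>i\<in>UNIV. \<Sum>j\<in>UNIV. v $ i * v $ j * cov_matrix P $ i $ j)"
    unfolding square_inner_diff_eq using integrable_component_diff_mult by (simp add: cov_matrix_def)
  also have "\<dots> = v \<bullet> (cov_matrix P *v v)"
    by (simp add: inner_vec_def matrix_vector_mult_def sum_distrib_left ac_simps)
  finally show ?thesis .
qed

lemma multippi_est_mean_square_error:
  fixes M :: "'w measure" and X :: "'k set \<Rightarrow> nat \<Rightarrow> 'w \<Rightarrow> real^'k"
  assumes M: "prob_space M"
    and X_rv: "\<forall>I\<in>\<I>. \<forall>j<n I. X I j \<in> borel_measurable M"
    and X_dist: "\<forall>I\<in>\<I>. \<forall>j<n I. distr M borel (X I j) = P"
    and X_indep: "prob_space.indep_vars M (\<lambda>_. borel) (\<lambda>(I, j). X I j) {(I, j). I \<in> \<I> \<and> j < n I}"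
    and unbiased: "(\<Sum>I\<in>{I\<in>\<I>. n I > 0}. l I) = axis one 1"
  shows "prob_space.expectation M (\<lambda>\<omega>. (multippi_est \<I> n l X \<omega> - (\<integral>x. x $ one \<partial>P))\<^sup>2)
         = alloc_objective (cov_matrix P) \<I> n l"
proof -
  interpret M: prob_space M by (rule M)
  define J where "J = {(I, j). I \<in> \<I> \<and> j < n I}"
  define h where "h I = (\<lambda>x. l I \<bullet> (x - mean_vec P) / real (n I))" for I
  define Y where "Y = (\<lambda>(I, j) \<omega>. h I (X I j \<omega>))"
  have J_Sigma: "J = Sigma \<I> (\<lambda>I. {..<n I})" by (auto simp: J_def)
  have h_borel: "h I \<in> borel_measurable borel" for I unfolding h_def by simp
  have transfer: "integrable M (\<lambda>\<omega>. f (X I j \<omega>)) \<longleftrightarrow> integrable P f"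
    "M.expectation (\<lambda>\<omega>. f (X I j \<omega>)) = (\<integral>x. f x \<partial>P)"
    if "(I, j) \<in> J" "f \<in> borel_measurable borel" for I j and f :: "real^'k \<Rightarrow> real"
    using that X_rv X_dist integrable_distr_eq[of "X I j" M borel f] integral_distr[of "X I j" M borel f]
    by (auto simp: J_def)
  have "(\<integral>x. x $ one \<partial>P) = axis one 1 \<bullet> mean_vec P"
    by (simp add: inner_axis' mean_vec_def)
  then have error: "multippi_est \<I> n l X \<omega> - (\<integral>x. x $ one \<partial>P) = (\<Sum>p\<in>J. Y p \<omega>)" for \<omega>
    using multippi_est_minus_eq_sum[OF unbiased] by (simp add: J_def Y_def h_def case_prod_beta')
  have "M.indep_vars (\<lambda>_. borel) Y J"
    unfolding Y_def J_def
    using M.indep_vars_compose2[OF X_indep, of "\<lambda>(I, j). h I"] h_borel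
    by (simp add: case_prod_beta')
  moreover have "finite J" by (simp add: J_Sigma)
  moreover have "integrable M (Y p)" "M.expectation (Y p) = 0" "integrable M (\<lambda>\<omega>. (Y p \<omega>)\<^sup>2)"
    "M.expectation (\<lambda>\<omega>. (Y p \<omega>)\<^sup>2) = l (fst p) \<bullet> (cov_matrix P *v l (fst p)) / (real (n (fst p)))\<^sup>2"
    if "p \<in> J" for p
  proof -
    obtain I j where p: "p = (I, j)" by force
    have square_borel: "(\<lambda>x. (h I x)\<^sup>2) \<in> borel_measurable borel" using h_borel by simp
    show "integrable M (Y p)" "M.expectation (Y p) = 0"
      using transfer[OF that[unfolded p] h_borel[of I]] integrable_inner_diff integral_inner_diff_mean
      by (simp_all add: Y_def p h_def)
    show "integrable M (\<lambda>\<omega>. (Y p \<omega>)\<^sup>2)"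
      "M.expectation (\<lambda>\<omega>. (Y p \<omega>)\<^sup>2) = l (fst p) \<bullet> (cov_matrix P *v l (fst p)) / (real (n (fst p)))\<^sup>2"
      using transfer[OF that[unfolded p] square_borel] integrable_square_inner_diff
        integral_square_inner_diff_mean
      by (simp_all add: Y_def p h_def power_divide)
  qed
  ultimately have "M.expectation (\<lambda>\<omega>. (multippi_est \<I> n l X \<omega> - (\<integral>x. x $ one \<partial>P))\<^sup>2)
      = (\<Sum>p\<in>J. l (fst p) \<bullet> (cov_matrix P *v l (fst p)) / (real (n (fst p)))\<^sup>2)"
    unfolding error by (simp add: M.expectation_square_sum_indep_vars)
  also have "\<dots> = (\<Sum>I\<in>\<I>. \<Sum>j<n I. l I \<bullet> (cov_matrix P *v l I) / (real (n I))\<^sup>2)"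
    unfolding J_Sigma by (subst sum.Sigma) (simp_all add: split_beta)
  also have "\<dots> = (\<Sum>I\<in>\<I>. if 0 < n I then l I \<bullet> (cov_matrix P *v l I) / real (n I) else 0)"
    by (intro sum.cong) (auto simp: power2_eq_square)
  also have "\<dots> = alloc_objective (cov_matrix P) \<I> n l"
    by (simp add: alloc_objective_def sum.inter_filter)
  finally show ?thesis .
qed

end

theorem theorem3:
  fixes P :: "(real^'k) measure"
    and M :: "'w measure"
    and one :: 'k
    and \<I> :: "'k set set"
    and c :: "'k set \<Rightarrow> real^'m"
    and B :: "real^'m"
    and \<Sigma>hat :: "real^'k^'k"
    and n :: "'k set \<Rightarrow> nat"
    and l :: "'k set \<Rightarrow> real^'k"
    and X :: "'k set \<Rightarrow> nat \<Rightarrow> 'w \<Rightarrow> real^'k"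
  assumes P_prob: "prob_space P" and P_sets: "sets P = sets borel"
    and P_moment2: "integrable P (\<lambda>x. (norm x)\<^sup>2)"
    and gamma_pos: "min_eigenvalue (cov_matrix P) > 0"
    and I_nonempty: "\<forall>I\<in>\<I>. I \<noteq> {}"
    and c_nonneg: "\<forall>I r. 0 \<le> c I $ r"
    and B_nonneg: "\<forall>r. 0 \<le> B $ r"
    and classical_ex: "\<exists>I0\<in>\<I>. one \<in> I0 \<and> (\<forall>r. c I0 $ r \<le> B $ r)"
    and Shat_spd: "spd \<Sigma>hat"
    and Shat_close: "frob_norm (\<Sigma>hat - cov_matrix P) \<le> min_eigenvalue (cov_matrix P) / 2"
    and opt_feas: "feasible_unbiased \<I> c B (axis one 1) n l"
    and opt_min: "\<forall>n' l'. feasible_unbiased \<I> c B (axis one 1) n' l' \<longrightarrow>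
                     alloc_objective \<Sigma>hat \<I> n l \<le> alloc_objective \<Sigma>hat \<I> n' l'"
    and M_prob: "prob_space M"
    and X_rv: "\<forall>I\<in>\<I>. \<forall>j<n I. X I j \<in> borel_measurable M"
    and X_dist: "\<forall>I\<in>\<I>. \<forall>j<n I. distr M borel (X I j) = P"
    and X_indep: "prob_space.indep_vars M (\<lambda>_. borel) (\<lambda>(I, j). X I j)
                    {(I, j). I \<in> \<I> \<and> j < n I}"
  shows "prob_space.expectation M
           (\<lambda>\<omega>. (multippi_est \<I> n l X \<omega> - (\<integral>x. x $ one \<partial>P))\<^sup>2)
         \<le> V_B (cov_matrix P) \<I> c B (axis one 1)
           + 4 * sigma2_classical (cov_matrix P) one \<I> c B / min_eigenvalue (cov_matrix P)
             * frob_norm (\<Sigma>hat - cov_matrix P)"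
proof -
  interpret finite_second_moment P
    using P_prob P_sets P_moment2
    by (simp add: finite_second_moment_def finite_second_moment_axioms_def)
  define t where "t = frob_norm (\<Sigma>hat - cov_matrix P) / min_eigenvalue (cov_matrix P)"
  have t_nonneg: "0 \<le> t"
    using gamma_pos by (simp add: t_def frob_norm_eq_norm)
  have "(\<Sum>I\<in>{I\<in>\<I>. n I > 0}. l I) = axis one 1"
    using opt_feas by (simp add: feasible_unbiased_def unbiased_weights_def)
  then have mse: "prob_space.expectation M (\<lambda>\<omega>. (multippi_est \<I> n l X \<omega> - (\<integral>x. x $ one \<partial>P))\<^sup>2)
      = alloc_objective (cov_matrix P) \<I> n l"
    by (rule multippi_est_mean_square_error[OF M_prob X_rv X_dist X_indep])
  have "alloc_objective (cov_matrix P) \<I> n l \<le> (1 + 4 * t) * V_B (cov_matrix P) \<I> c B (axis one 1)"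
    unfolding t_def
    by (rule alloc_objective_perturbed_minimiser_le_V_B
        [OF transpose_cov_matrix gamma_pos Shat_close classical_ex opt_min])
  moreover have "4 * t * V_B (cov_matrix P) \<I> c B (axis one 1)
      \<le> 4 * t * sigma2_classical (cov_matrix P) one \<I> c B"
    using V_B_le_sigma2_classical[OF transpose_cov_matrix _ classical_ex] gamma_pos t_nonneg
    by (simp add: mult_left_mono)
  ultimately show ?thesis
    unfolding mse by (simp add: t_def algebra_simps)
qed

end
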